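(* Let $\tau\in\mathbb{H}$ (the upper half-plane) and let $\Lambda=\langle 1,\tau\rangle_\mathbb{Z}$. (1) The lattice $\Lambda$ is isogenous to $\overline{\Lambda}$ if and only if $\tau$ belongs to a hyperbolic geodesic in $\mathbb{H}$ with both endpoints in $\mathbb{P}^1(\mathbb{Q})$, or with endpoints that are conjugate real quadratic irrationals. (2) There exists a non-zero element of $\mathrm{Isog}(\Lambda,\overline{\Lambda})$ with rational absolute value if and only if $\tau$ belongs to a hyperbolic geodesic in $\mathbb{H}$ with both endpoints in $\mathbb{P}^1(\mathbb{Q})$.
   Context: Geodesics in $\mathbb{H}$ are vertical half-lines and semicircles centered on the real axis; their endpoints lie in $\mathbb{P}^1(\mathbb{R})=\mathbb{R}\cup\{\infty\}$. $\langle 1,\tau\rangle_\mathbb{Z}$ is the $\mathbb{Z}$-module generated by $1,\tau$, and $\overline{\Lambda}$ the complex conjugate lattice. For lattices $\Lambda_1,\Lambda_2$, $\mathrm{Isog}(\Lambda_1,\Lambda_2)=\{\alpha\in\mathbb{C}:\alpha\Lambda_1\subset\Lambda_2\}$, and $\Lambda_1$ is isogenous to $\Lambda_2$ if this group is non-zero. *)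

theory Defs
  imports Complex_Main
begin

definition lattice_gen :: "complex \<Rightarrow> complex set" where
  "lattice_gen \<tau> = {of_int m + of_int n * \<tau> | m n :: int. True}"

definition conj_lattice :: "complex set \<Rightarrow> complex set" where
  "conj_lattice L = cnj ` L"

definition Isog :: "complex set \<Rightarrow> complex set \<Rightarrow> complex set" where
  "Isog L1 L2 = {\<alpha>. (\<lambda>z. \<alpha> * z) ` L1 \<subseteq> L2}"

definition isogenous :: "complex set \<Rightarrow> complex set \<Rightarrow> bool" where
  "isogenous L1 L2 \<longleftrightarrow> Isog L1 L2 \<noteq> {0}"

datatype P1R = Fin real | Infty

definition P1Q :: "P1R set" where
  "P1Q = {Infty} \<union> {Fin r | r. r \<in> \<rat>}"

fun geodesic :: "P1R \<Rightarrow> P1R \<Rightarrow> complex set" where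
  "geodesic (Fin a) (Fin b) =
     {z. Im z > 0 \<and> cmod (z - complex_of_real ((a + b) / 2)) = \<bar>b - a\<bar> / 2}"
| "geodesic (Fin a) Infty = {z. Im z > 0 \<and> Re z = a}"
| "geodesic Infty (Fin b) = {z. Im z > 0 \<and> Re z = b}"
| "geodesic Infty Infty = {}"

definition conj_real_quad_irr :: "real \<Rightarrow> real \<Rightarrow> bool" where
  "conj_real_quad_irr a b \<longleftrightarrow> a \<notin> \<rat> \<and> a \<noteq> b \<and>
     (\<exists>r s. r \<in> \<rat> \<and> s \<in> \<rat> \<and> a\<^sup>2 + r * a + s = 0 \<and> b\<^sup>2 + r * b + s = 0)"

definition on_rational_geodesic :: "complex \<Rightarrow> bool" where
  "on_rational_geodesic \<tau> \<longleftrightarrow>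
     (\<exists>p q. p \<in> P1Q \<and> q \<in> P1Q \<and> p \<noteq> q \<and> \<tau> \<in> geodesic p q)"

definition on_quadratic_geodesic :: "complex \<Rightarrow> bool" where
  "on_quadratic_geodesic \<tau> \<longleftrightarrow>
     (\<exists>a b. conj_real_quad_irr a b \<and> \<tau> \<in> geodesic (Fin a) (Fin b))"

end

theory Submission
  imports Defs
begin

text \<open>Since \<open>\<alpha> = \<alpha> \<cdot> 1\<close> must lie in \<open>cnj \<Lambda>\<close>, every element of
  \<open>Isog(\<Lambda>, cnj \<Lambda>)\<close> has the form \<open>\<alpha> = a + b cnj \<tau>\<close> with \<open>a, b \<in> \<int>\<close>, and the remaining condition
  \<open>\<alpha> \<tau> \<in> cnj \<Lambda>\<close> says exactly that \<open>b |\<tau>|\<^sup>2 + 2 a Re \<tau> = c\<close> for some integer \<open>c\<close>: the point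
  \<open>\<tau>\<close> lies on the geodesic \<open>b |z|\<^sup>2 + 2 a Re z = c\<close>. Moreover \<open>|\<alpha>|\<^sup>2 = a\<^sup>2 + b c\<close>. For \<open>b = 0\<close>
  this geodesic is the vertical line over the rational point \<open>c / 2a\<close>; for \<open>b \<noteq> 0\<close> it is the
  semicircle whose endpoints \<open>(-a \<plusminus> |\<alpha>|) / b\<close> are the roots of \<open>b x\<^sup>2 + 2 a x - c\<close>, hence
  rational when \<open>|\<alpha>|\<close> is and conjugate quadratic irrationals otherwise. Conversely, a geodesic
  whose endpoints have rational sum and product acquires such an integral equation after
  clearing denominators.\<close>

definition integral_geodesic_eq :: "complex \<Rightarrow> int \<Rightarrow> int \<Rightarrow> int \<Rightarrow> bool" where
  "integral_geodesic_eq \<tau> a b c \<longleftrightarrow>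
     of_int b * ((Re \<tau>)\<^sup>2 + (Im \<tau>)\<^sup>2) + 2 * of_int a * Re \<tau> = of_int c"

lemma mem_lattice_gen_iff: "z \<in> lattice_gen \<tau> \<longleftrightarrow> (\<exists>m n. z = of_int m + of_int n * \<tau>)"
  by (auto simp: lattice_gen_def)

lemma isogenous_iff_nonzero_Isog:
  assumes "0 \<in> L2"
  shows "isogenous L1 L2 \<longleftrightarrow> (\<exists>\<alpha>\<in>Isog L1 L2. \<alpha> \<noteq> 0)"
proof -
  have "0 \<in> Isog L1 L2" using assms by (auto simp: Isog_def)
  then show ?thesis unfolding isogenous_def by blast
qed

lemma Isog_lattice_gen_conj_iff:
  assumes "Im \<tau> \<noteq> 0"
  shows "\<alpha> \<in> Isog (lattice_gen \<tau>) (conj_lattice (lattice_gen \<tau>)) \<longleftrightarrow>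
     (\<exists>a b c. \<alpha> = of_int a + of_int b * cnj \<tau> \<and> integral_geodesic_eq \<tau> a b c)"
    (is "?lhs \<longleftrightarrow> ?rhs")
proof
  assume ?lhs
  have generators: "1 \<in> lattice_gen \<tau>" "\<tau> \<in> lattice_gen \<tau>"
    unfolding mem_lattice_gen_iff by (metis mult_zero_left of_int_0 of_int_1 add_0 add_0_right mult_1)+
  from \<open>?lhs\<close> have image: "\<alpha> * z \<in> cnj ` lattice_gen \<tau>" if "z \<in> lattice_gen \<tau>" for z
    using that by (auto simp: Isog_def conj_lattice_def)
  obtain a b where \<alpha>: "\<alpha> = cnj (of_int a + of_int b * \<tau>)"
    using image[OF generators(1)] by (force simp: mem_lattice_gen_iff)
  obtain c d where \<alpha>\<tau>: "\<alpha> * \<tau> = cnj (of_int c + of_int d * \<tau>)"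
    using image[OF generators(2)] by (force simp: mem_lattice_gen_iff)
  have "(of_int a + of_int d) * Im \<tau> = 0"
    using arg_cong[OF \<alpha>\<tau>, of Im] by (simp add: \<alpha> algebra_simps)
  then have "real_of_int d = - of_int a"
    using assms by simp
  then have "integral_geodesic_eq \<tau> a b c"
    using arg_cong[OF \<alpha>\<tau>, of Re]
    by (simp add: \<alpha> integral_geodesic_eq_def algebra_simps power2_eq_square)
  moreover have "\<alpha> = of_int a + of_int b * cnj \<tau>"
    by (simp add: \<alpha>)
  ultimately show ?rhs by blast
next
  assume ?rhs
  then obtain a b c where \<alpha>: "\<alpha> = of_int a + of_int b * cnj \<tau>"
    and eq: "integral_geodesic_eq \<tau> a b c" by blast
  have c: "of_int c = of_int b * ((Re \<tau>)\<^sup>2 + (Im \<tau>)\<^sup>2) + 2 * of_int a * Re \<tau>"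
    using eq by (simp add: integral_geodesic_eq_def)
  have "\<alpha> * (of_int m + of_int n * \<tau>) \<in> cnj ` lattice_gen \<tau>" for m n
  proof -
    have "\<alpha> * (of_int m + of_int n * \<tau>) = cnj (of_int (a*m + c*n) + of_int (b*m - a*n) * \<tau>)"
      by (simp add: \<alpha> c complex_eq_iff algebra_simps power2_eq_square)
    moreover have "of_int (a*m + c*n) + of_int (b*m - a*n) * \<tau> \<in> lattice_gen \<tau>"
      unfolding mem_lattice_gen_iff by blast
    ultimately show ?thesis
      by blast
  qed
  then show ?lhs
    by (auto simp: Isog_def conj_lattice_def mem_lattice_gen_iff)
qed

lemma norm_isog_coeffs:
  assumes "integral_geodesic_eq \<tau> a b c"
  shows "cmod (of_int a + of_int b * cnj \<tau>) = sqrt (of_int (a\<^sup>2 + b * c))"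
proof -
  have c: "of_int c = of_int b * ((Re \<tau>)\<^sup>2 + (Im \<tau>)\<^sup>2) + 2 * of_int a * Re \<tau>"
    using assms by (simp add: integral_geodesic_eq_def)
  have "(cmod (of_int a + of_int b * cnj \<tau>))\<^sup>2 = of_int (a\<^sup>2 + b * c)"
    unfolding cmod_power2 by (simp add: c algebra_simps power2_eq_square)
  then show ?thesis
    by (metis norm_ge_zero real_sqrt_unique)
qed

lemma isog_coeffs_eq_0_iff:
  assumes "Im \<tau> \<noteq> 0"
  shows "of_int a + of_int b * cnj \<tau> = 0 \<longleftrightarrow> a = 0 \<and> b = 0"
  using assms by (auto simp: complex_eq_iff)

lemma ex_nonzero_Isog_lattice_gen_conj_iff:
  assumes "Im \<tau> \<noteq> 0"
  shows "(\<exists>\<alpha>\<in>Isog (lattice_gen \<tau>) (conj_lattice (lattice_gen \<tau>)). \<alpha> \<noteq> 0 \<and> P (cmod \<alpha>)) \<longleftrightarrow>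
    (\<exists>a b c. integral_geodesic_eq \<tau> a b c \<and> (a \<noteq> 0 \<or> b \<noteq> 0) \<and> P (sqrt (of_int (a\<^sup>2 + b * c))))"
proof -
  have "(\<exists>\<alpha>\<in>Isog (lattice_gen \<tau>) (conj_lattice (lattice_gen \<tau>)). \<alpha> \<noteq> 0 \<and> P (cmod \<alpha>)) \<longleftrightarrow>
    (\<exists>a b c. integral_geodesic_eq \<tau> a b c \<and> of_int a + of_int b * cnj \<tau> \<noteq> 0 \<and>
       P (cmod (of_int a + of_int b * cnj \<tau>)))"
    unfolding Bex_def Isog_lattice_gen_conj_iff[OF assms] by blast
  also have "\<dots> \<longleftrightarrow>
    (\<exists>a b c. integral_geodesic_eq \<tau> a b c \<and> (a \<noteq> 0 \<or> b \<noteq> 0) \<and> P (sqrt (of_int (a\<^sup>2 + b * c))))"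
    by (intro ex_cong1 conj_cong refl) (simp_all add: norm_isog_coeffs isog_coeffs_eq_0_iff[OF assms])
  finally show ?thesis .
qed

lemma mem_geodesic_Fin_Fin_iff:
  "z \<in> geodesic (Fin r) (Fin s) \<longleftrightarrow>
     Im z > 0 \<and> (Re z)\<^sup>2 + (Im z)\<^sup>2 - (r + s) * Re z + r * s = 0"
proof -
  have "cmod (z - of_real ((r + s) / 2)) = \<bar>s - r\<bar> / 2 \<longleftrightarrow>
        (cmod (z - of_real ((r + s) / 2)))\<^sup>2 = (\<bar>s - r\<bar> / 2)\<^sup>2"
    by (rule power2_eq_iff_nonneg[symmetric]) auto
  also have "\<dots> \<longleftrightarrow> (Re z)\<^sup>2 + (Im z)\<^sup>2 - (r + s) * Re z + r * s = 0"
  proof -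
    have "(cmod (z - of_real ((r + s) / 2)))\<^sup>2 = (Re z - (r + s) / 2)\<^sup>2 + (Im z)\<^sup>2"
      by (simp add: cmod_power2)
    moreover have "(\<bar>s - r\<bar> / 2)\<^sup>2 = ((s - r) / 2)\<^sup>2"
      by (simp add: power_divide)
    moreover have "(Re z - (r + s) / 2)\<^sup>2 + (Im z)\<^sup>2 - ((s - r) / 2)\<^sup>2
        = (Re z)\<^sup>2 + (Im z)\<^sup>2 - (r + s) * Re z + r * s"
      by (simp add: power2_eq_square field_simps)
    ultimately show ?thesis by linarith
  qed
  finally show ?thesis by simp
qed

lemma Rats_common_denominator:
  assumes "x \<in> \<rat>" "y \<in> \<rat>"
  obtains m p q :: int where "m > 0" "x = of_int p / of_int m" "y = of_int q / of_int m"
proof -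
  obtain p1 m1 :: int where "m1 > 0" "x = of_int p1 / of_int m1"
    using Rats_cases'[OF assms(1)] by metis
  moreover obtain p2 m2 :: int where "m2 > 0" "y = of_int p2 / of_int m2"
    using Rats_cases'[OF assms(2)] by metis
  ultimately show ?thesis
    by (intro that[of "m1 * m2" "p1 * m2" "p2 * m1"]) auto
qed

lemma integral_geodesic_eq_of_circle:
  assumes "r + s \<in> \<rat>" "r * s \<in> \<rat>" and "z \<in> geodesic (Fin r) (Fin s)"
  obtains a b c where "integral_geodesic_eq z a b c" "b \<noteq> 0"
    "sqrt (of_int (a\<^sup>2 + b * c)) = \<bar>r - s\<bar> * of_int \<bar>b\<bar> / 2"
proof -
  obtain m p q where m: "m > 0" and p: "r + s = of_int p / of_int m" and q: "r * s = of_int q / of_int m"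
    using Rats_common_denominator[OF assms(1,2)] .
  have circle: "(Re z)\<^sup>2 + (Im z)\<^sup>2 = (r + s) * Re z - r * s"
    using assms(3) unfolding mem_geodesic_Fin_Fin_iff by linarith
  have p': "of_int p = of_int m * (r + s)" and q': "of_int q = of_int m * (r * s)"
    using m by (simp_all add: p q)
  then have "integral_geodesic_eq z (- p) (2 * m) (- 2 * q)"
    unfolding integral_geodesic_eq_def circle by (simp add: algebra_simps)
  moreover have "of_int ((- p)\<^sup>2 + 2 * m * (- 2 * q)) = ((r - s) * of_int (2 * m) / 2)\<^sup>2"
  proof -
    have "of_int ((- p)\<^sup>2 + 2 * m * (- 2 * q)) = (of_int p)\<^sup>2 - 4 * of_int m * (of_int q :: real)"
      by simp
    also have "\<dots> = (of_int m)\<^sup>2 * ((r + s)\<^sup>2 - 4 * (r * s))"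
      by (simp add: p' q' power2_eq_square algebra_simps)
    also have "\<dots> = ((r - s) * of_int (2 * m) / 2)\<^sup>2"
      by (simp add: power2_eq_square algebra_simps)
    finally show ?thesis .
  qed
  then have "sqrt (of_int ((- p)\<^sup>2 + 2 * m * (- 2 * q))) = \<bar>r - s\<bar> * of_int \<bar>2 * m\<bar> / 2"
    by (simp add: abs_mult)
  ultimately show ?thesis
    using m by (intro that) auto
qed

lemma integral_geodesic_eq_of_vertical:
  assumes "Re z \<in> \<rat>"
  obtains a b c where "integral_geodesic_eq z a b c" "a \<noteq> 0" "sqrt (of_int (a\<^sup>2 + b * c)) \<in> \<rat>"
proof -
  obtain p q :: int where q: "q > 0" and re: "Re z = of_int p / of_int q"
    using Rats_cases'[OF assms] by metis
  have "integral_geodesic_eq z q 0 (2 * p)"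
    using q by (simp add: integral_geodesic_eq_def re)
  moreover have "sqrt (of_int (q\<^sup>2 + 0 * (2 * p))) = of_int q"
    using q by simp
  moreover have "q \<noteq> 0"
    using q by simp
  ultimately show ?thesis
    by (metis Rats_of_int that)
qed

lemma integral_geodesic_eq_of_rational_geodesic:
  assumes "on_rational_geodesic z"
  obtains a b c where "integral_geodesic_eq z a b c" "a \<noteq> 0 \<or> b \<noteq> 0"
    "sqrt (of_int (a\<^sup>2 + b * c)) \<in> \<rat>"
proof -
  obtain p q where "p \<in> P1Q" "q \<in> P1Q" "p \<noteq> q" "z \<in> geodesic p q"
    using assms unfolding on_rational_geodesic_def by blast
  then consider (circle) r s where "r \<in> \<rat>" "s \<in> \<rat>" "z \<in> geodesic (Fin r) (Fin s)"
    | (vertical) "Re z \<in> \<rat>"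
    \<comment> \<open>unfolding the semicircle into its \<open>cmod\<close> equation stalls \<open>auto\<close>\<close>
    by (cases p; cases q) (auto simp: P1Q_def simp del: geodesic.simps(1))
  then show ?thesis
  proof cases
    case circle
    then have "r + s \<in> \<rat>" "r * s \<in> \<rat>"
      by simp_all
    then obtain a b c where "integral_geodesic_eq z a b c" "b \<noteq> 0"
      and norm: "sqrt (of_int (a\<^sup>2 + b * c)) = \<bar>r - s\<bar> * of_int \<bar>b\<bar> / 2"
      using integral_geodesic_eq_of_circle circle(3) by blast
    moreover have "sqrt (of_int (a\<^sup>2 + b * c)) \<in> \<rat>"
      unfolding norm using circle by simp
    ultimately show ?thesis
      using that by blast
  next
    case vertical
    then show ?thesis
      using integral_geodesic_eq_of_vertical that by metis
  qed
qed

lemma distinct_quadratic_roots_Vieta: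
  fixes x y r s :: "'a :: idom"
  assumes "x \<noteq> y" "x\<^sup>2 + r * x + s = 0" "y\<^sup>2 + r * y + s = 0"
  shows "x + y = - r" "x * y = s"
proof -
  have "(x - y) * (x + y + r) = (x\<^sup>2 + r * x + s) - (y\<^sup>2 + r * y + s)"
    by (simp add: algebra_simps power2_eq_square)
  then have "x + y + r = 0"
    using assms by simp
  then show sum: "x + y = - r"
    by (simp add: eq_neg_iff_add_eq_0)
  with assms(2) show "x * y = s"
    by algebra
qed

lemma integral_geodesic_eq_of_quadratic_geodesic:
  assumes "on_quadratic_geodesic z"
  obtains a b c where "integral_geodesic_eq z a b c" "b \<noteq> 0"
proof -
  obtain x y r s where "x \<noteq> y" "r \<in> \<rat>" "s \<in> \<rat>" "x\<^sup>2 + r * x + s = 0" "y\<^sup>2 + r * y + s = 0"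
    and z: "z \<in> geodesic (Fin x) (Fin y)"
    using assms unfolding on_quadratic_geodesic_def conj_real_quad_irr_def by blast
  then have "x + y = - r" "x * y = s"
    using distinct_quadratic_roots_Vieta by blast+
  then have "x + y \<in> \<rat>" "x * y \<in> \<rat>"
    using \<open>r \<in> \<rat>\<close> \<open>s \<in> \<rat>\<close> by simp_all
  then show ?thesis
    using integral_geodesic_eq_of_circle[OF _ _ z] that by metis
qed

lemma quadratic_formula_root:
  fixes a b c k :: "'a :: field"
  assumes "b \<noteq> 0" "k\<^sup>2 = a\<^sup>2 + b * c"
  shows "((k - a) / b)\<^sup>2 + (2 * a / b) * ((k - a) / b) + (- c / b) = 0"
proof -
  have "b\<^sup>2 * (((k - a) / b)\<^sup>2 + (2 * a / b) * ((k - a) / b) + (- c / b)) = k\<^sup>2 - a\<^sup>2 - b * c"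
    using assms(1) by (simp add: field_simps power2_eq_square)
  then show ?thesis
    using assms by simp
qed

lemma geodesic_of_integral_geodesic_eq:
  assumes "Im z > 0" "integral_geodesic_eq z a b c" "b \<noteq> 0"
  defines "k \<equiv> sqrt (of_int (a\<^sup>2 + b * c))"
  shows "k > 0" "z \<in> geodesic (Fin ((k - of_int a) / of_int b)) (Fin ((- k - of_int a) / of_int b))"
proof -
  have k: "k = cmod (of_int a + of_int b * cnj z)"
    using assms(2) by (simp add: k_def norm_isog_coeffs)
  then show k_pos: "k > 0"
    using assms(1,3) isog_coeffs_eq_0_iff[of z a b] by simp
  from k_pos have "k\<^sup>2 = of_int (a\<^sup>2 + b * c)"
    unfolding k_def by (simp add: real_sqrt_gt_0_iff)
  then have "(k - of_int a) / of_int b * ((- k - of_int a) / of_int b) = - of_int c / of_int b"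
    using assms(3) by (simp add: field_simps power2_eq_square)
  moreover have "(k - of_int a) / of_int b + (- k - of_int a) / of_int b = - 2 * of_int a / of_int b"
    using assms(3) by (simp add: field_simps)
  moreover have "(Re z)\<^sup>2 + (Im z)\<^sup>2 - (- 2 * of_int a / of_int b) * Re z + (- of_int c / of_int b) = 0"
    using assms(2,3) by (simp add: integral_geodesic_eq_def field_simps)
  ultimately show "z \<in> geodesic (Fin ((k - of_int a) / of_int b)) (Fin ((- k - of_int a) / of_int b))"
    unfolding mem_geodesic_Fin_Fin_iff using assms(1) by simp
qed

lemma rational_geodesic_of_integral_geodesic_eq:
  assumes "Im z > 0" "integral_geodesic_eq z a b c" "a \<noteq> 0 \<or> b \<noteq> 0"
    and "sqrt (of_int (a\<^sup>2 + b * c)) \<in> \<rat>"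
  shows "on_rational_geodesic z"
proof (cases "b = 0")
  case True
  then have "Re z = of_int c / (2 * of_int a)" "a \<noteq> 0"
    using assms(2,3) by (auto simp: integral_geodesic_eq_def field_simps)
  then have "Fin (Re z) \<in> P1Q"
    by (simp add: P1Q_def)
  moreover have "z \<in> geodesic (Fin (Re z)) Infty"
    using assms(1) by simp
  moreover have "Infty \<in> P1Q"
    by (simp add: P1Q_def)
  ultimately show ?thesis
    unfolding on_rational_geodesic_def by (intro exI[of _ "Fin (Re z)"] exI[of _ Infty]) simp
next
  case False
  define k where "k = sqrt (of_int (a\<^sup>2 + b * c))"
  define x where "x = (k - of_int a) / of_int b"
  define y where "y = (- k - of_int a) / of_int b"
  have "k > 0" and geo: "z \<in> geodesic (Fin x) (Fin y)"
    using geodesic_of_integral_geodesic_eq[OF assms(1,2) False] by (simp_all add: k_def x_def y_def)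
  have "k \<in> \<rat>"
    using assms(4) by (simp add: k_def)
  then have "Fin x \<in> P1Q" "Fin y \<in> P1Q"
    by (auto simp: P1Q_def x_def y_def)
  moreover have "x \<noteq> y"
    using \<open>k > 0\<close> False by (simp add: x_def y_def)
  ultimately show ?thesis
    unfolding on_rational_geodesic_def using geo by blast
qed

lemma quadratic_geodesic_of_integral_geodesic_eq:
  assumes "Im z > 0" "integral_geodesic_eq z a b c" "sqrt (of_int (a\<^sup>2 + b * c)) \<notin> \<rat>"
  shows "on_quadratic_geodesic z"
proof -
  define k where "k = sqrt (of_int (a\<^sup>2 + b * c))"
  define x where "x = (k - of_int a) / of_int b"
  define y where "y = (- k - of_int a) / of_int b"
  have "b \<noteq> 0"
    using assms(3) by (cases "b = 0") auto
  then have "k > 0" and geo: "z \<in> geodesic (Fin x) (Fin y)"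
    using geodesic_of_integral_geodesic_eq[OF assms(1,2)] by (simp_all add: k_def x_def y_def)
  then have k2: "k\<^sup>2 = of_int a ^ 2 + of_int b * of_int c" "(- k)\<^sup>2 = of_int a ^ 2 + of_int b * of_int c"
    by (simp_all add: k_def real_sqrt_gt_0_iff)
  have "x \<notin> \<rat>"
  proof
    assume "x \<in> \<rat>"
    moreover have "k = of_int b * x + of_int a"
      using \<open>b \<noteq> 0\<close> by (simp add: x_def)
    ultimately have "k \<in> \<rat>"
      by (metis Rats_add Rats_mult Rats_of_int)
    with assms(3) show False
      by (simp add: k_def)
  qed
  moreover have "x \<noteq> y"
    using \<open>k > 0\<close> \<open>b \<noteq> 0\<close> by (simp add: x_def y_def)
  moreover have "x\<^sup>2 + (2 * of_int a / of_int b) * x + (- of_int c / of_int b) = 0"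
    using quadratic_formula_root[OF _ k2(1)] \<open>b \<noteq> 0\<close> by (simp add: x_def)
  moreover have "y\<^sup>2 + (2 * of_int a / of_int b) * y + (- of_int c / of_int b) = 0"
    using quadratic_formula_root[OF _ k2(2)] \<open>b \<noteq> 0\<close> by (simp add: y_def)
  ultimately have "conj_real_quad_irr x y"
    unfolding conj_real_quad_irr_def
    by (intro conjI exI[of _ "2 * of_int a / of_int b"] exI[of _ "- of_int c / of_int b"]) simp_all
  then show ?thesis
    unfolding on_quadratic_geodesic_def using geo by blast
qed

lemma ex_integral_geodesic_eq_iff:
  assumes "Im \<tau> > 0"
  shows "(\<exists>a b c. integral_geodesic_eq \<tau> a b c \<and> (a \<noteq> 0 \<or> b \<noteq> 0)) \<longleftrightarrow>
    on_rational_geodesic \<tau> \<or> on_quadratic_geodesic \<tau>"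
proof
  assume "\<exists>a b c. integral_geodesic_eq \<tau> a b c \<and> (a \<noteq> 0 \<or> b \<noteq> 0)"
  then show "on_rational_geodesic \<tau> \<or> on_quadratic_geodesic \<tau>"
    using assms rational_geodesic_of_integral_geodesic_eq quadratic_geodesic_of_integral_geodesic_eq
    by blast
next
  assume "on_rational_geodesic \<tau> \<or> on_quadratic_geodesic \<tau>"
  then show "\<exists>a b c. integral_geodesic_eq \<tau> a b c \<and> (a \<noteq> 0 \<or> b \<noteq> 0)"
    by (elim disjE integral_geodesic_eq_of_rational_geodesic integral_geodesic_eq_of_quadratic_geodesic)
      blast+
qed

lemma ex_integral_geodesic_eq_rational_norm_iff:
  assumes "Im \<tau> > 0"
  shows "(\<exists>a b c. integral_geodesic_eq \<tau> a b c \<and> (a \<noteq> 0 \<or> b \<noteq> 0) \<and> sqrt (of_int (a\<^sup>2 + b * c)) \<in> \<rat>)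
    \<longleftrightarrow> on_rational_geodesic \<tau>"
  using assms rational_geodesic_of_integral_geodesic_eq integral_geodesic_eq_of_rational_geodesic
  by metis

lemma zero_mem_conj_lattice_gen: "0 \<in> conj_lattice (lattice_gen \<tau>)"
proof -
  have "0 \<in> lattice_gen \<tau>"
    unfolding mem_lattice_gen_iff by (metis add_0 mult_zero_left of_int_0)
  then show ?thesis
    by (force simp: conj_lattice_def)
qed

theorem proposition3p1p1:
  fixes \<tau> :: complex
  assumes "Im \<tau> > 0"
  shows "(isogenous (lattice_gen \<tau>) (conj_lattice (lattice_gen \<tau>)) \<longleftrightarrow>
           (on_rational_geodesic \<tau> \<or> on_quadratic_geodesic \<tau>)) \<and>
         ((\<exists>\<alpha> \<in> Isog (lattice_gen \<tau>) (conj_lattice (lattice_gen \<tau>)).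
            \<alpha> \<noteq> 0 \<and> cmod \<alpha> \<in> \<rat>) \<longleftrightarrow> on_rational_geodesic \<tau>)"
proof -
  have "Im \<tau> \<noteq> 0"
    using assms by simp
  then have "isogenous (lattice_gen \<tau>) (conj_lattice (lattice_gen \<tau>)) \<longleftrightarrow>
      (\<exists>a b c. integral_geodesic_eq \<tau> a b c \<and> (a \<noteq> 0 \<or> b \<noteq> 0))"
    and "(\<exists>\<alpha> \<in> Isog (lattice_gen \<tau>) (conj_lattice (lattice_gen \<tau>)). \<alpha> \<noteq> 0 \<and> cmod \<alpha> \<in> \<rat>) \<longleftrightarrow>
      (\<exists>a b c. integral_geodesic_eq \<tau> a b c \<and> (a \<noteq> 0 \<or> b \<noteq> 0) \<and> sqrt (of_int (a\<^sup>2 + b * c)) \<in> \<rat>)"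
    using isogenous_iff_nonzero_Isog[OF zero_mem_conj_lattice_gen]
      ex_nonzero_Isog_lattice_gen_conj_iff[of \<tau> "\<lambda>_. True"]
      ex_nonzero_Isog_lattice_gen_conj_iff[of \<tau> "\<lambda>x. x \<in> \<rat>"]
    by simp_all
  then show ?thesis
    using ex_integral_geodesic_eq_iff[OF assms] ex_integral_geodesic_eq_rational_norm_iff[OF assms]
    by simp
qed

end
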